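(* Let $d\ge2$, $L\ge2$, $\sigma>0$ and define, with $c_1(n)=1+n\sigma^2$, $c_2(n)=1+\sigma^2(d+n)$, $c_3(\sigma,L)=16\sigma^2c_2(6)+8\sigma^2(L-1)c_1(6)+4\sigma^2(L-1)c_2(3)+\sigma^2(L-1)(L-2)c_1(6)+4c_2(8)+4(L-1)c_1(5)+2(L-1)c_2(4)+(L-1)(L-2)c_1(4)+4\sigma^2(L-1)$, and $\lambda^\star(\sigma,L)=\dfrac{2Lc_2(4)+L(L-1)c_1(4)}{c_3(\sigma,L)}$. Consider the function $\mathcal{R}^<(\kappa_0,\kappa_1)=A(\kappa_0^4+\kappa_1^4)+B(\kappa_0^2+\kappa_1^2)+C\kappa_0^2\kappa_1^2+D$ on $[-1,1]^2$ with $\lambda=\lambda^\star(\sigma,L)$. Then the points $(\pm1,\pm1)$ are global minima of $\mathcal{R}^<$ on $[-1,1]^2$.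
   Context: The constants (depending on $\lambda,\sigma,L,d$) are $A=\frac{2\lambda^2}{L^2}c_2(8)+\frac{2\lambda^2(L-1)}{L^2}c_1(5)+\frac{\lambda^2(L-1)}{L^2}c_2(4)+\frac{\lambda^2(L-1)(L-2)}{2L^2}c_1(4)$, $B=-\frac{2\lambda}{L}c_2(4)+\frac{16\lambda^2\sigma^2}{L^2}c_2(6)+\frac{8\lambda^2\sigma^2(L-1)}{L^2}c_1(6)-\frac{\lambda(L-1)}{L}c_1(4)+\frac{4\lambda^2\sigma^2(L-1)}{L^2}c_2(3)+\frac{\lambda^2\sigma^2(L-1)(L-2)}{L^2}c_1(6)$, $C=\frac{4\lambda^2\sigma^2(L-1)}{L^2}$, $D=c_1(d)-\frac{8\lambda\sigma^2}{L}c_2(2)+\frac{32\lambda^2\sigma^4}{L^2}c_2(4)+\frac{64\lambda^2\sigma^6(L-1)}{L^2}-\frac{8\lambda\sigma^4(L-1)}{L}+\frac{8\lambda^2\sigma^4(L-1)}{L^2}c_2(2)+\frac{8\lambda^2\sigma^6(L-1)(L-2)}{L^2}$. This function equals the attention risk $\mathcal{R}(\mu_0,\mu_1)=\frac1L\sum_\ell\mathbb{E}\|X_\ell-T^{\mathrm{lin},\mu_0,\mu_1}(\mathbb{X})_\ell\|^2$ on the manifold $\{(\mu_0,\mu_1)\in(\mathbb{S}^{d-1})^2:\langle\mu_1^\star,\mu_0\rangle=\langle\mu_0^\star,\mu_1\rangle=\langle\mu_0,\mu_1\rangle=0\}$, written in terms of $\kappa_0=\langle\mu_0^\star,\mu_0\rangle$,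 $\kappa_1=\langle\mu_1^\star,\mu_1\rangle$, for data i.i.d. from $\frac12\mathcal{N}(\mu_0^\star,\sigma^2I_d)+\frac12\mathcal{N}(\mu_1^\star,\sigma^2I_d)$ with orthonormal centroids, where $T^{\mathrm{lin},\mu_0,\mu_1}(\mathbb{X})_\ell=\frac{2}{L}\sum_k\lambda X_\ell^\top(\mu_0\mu_0^\top+\mu_1\mu_1^\top)X_kX_k$. *)

theory Defs
  imports Complex_Main
begin

definition c1 :: "real \<Rightarrow> real \<Rightarrow> real" where
  "c1 \<sigma> n = 1 + n * \<sigma>^2"

definition c2 :: "real \<Rightarrow> nat \<Rightarrow> real \<Rightarrow> real" where
  "c2 \<sigma> d n = 1 + \<sigma>^2 * (real d + n)"

definition c3 :: "real \<Rightarrow> nat \<Rightarrow> nat \<Rightarrow> real" where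
  "c3 \<sigma> d L = (let L = real L in
     16*\<sigma>^2*c2 \<sigma> d 6 + 8*\<sigma>^2*(L-1)*c1 \<sigma> 6 + 4*\<sigma>^2*(L-1)*c2 \<sigma> d 3
     + \<sigma>^2*(L-1)*(L-2)*c1 \<sigma> 6 + 4*c2 \<sigma> d 8 + 4*(L-1)*c1 \<sigma> 5
     + 2*(L-1)*c2 \<sigma> d 4 + (L-1)*(L-2)*c1 \<sigma> 4 + 4*\<sigma>^2*(L-1))"

definition lambda_star :: "real \<Rightarrow> nat \<Rightarrow> nat \<Rightarrow> real" where
  "lambda_star \<sigma> d L = (let L' = real L in
     (2*L'*c2 \<sigma> d 4 + L'*(L'-1)*c1 \<sigma> 4) / c3 \<sigma> d L)"

definition coefA :: "real \<Rightarrow> real \<Rightarrow> nat \<Rightarrow> nat \<Rightarrow> real" where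
  "coefA lam \<sigma> d L = (let L = real L in
     2*lam^2/L^2 * c2 \<sigma> d 8 + 2*lam^2*(L-1)/L^2 * c1 \<sigma> 5
     + lam^2*(L-1)/L^2 * c2 \<sigma> d 4 + lam^2*(L-1)*(L-2)/(2*L^2) * c1 \<sigma> 4)"

definition coefB :: "real \<Rightarrow> real \<Rightarrow> nat \<Rightarrow> nat \<Rightarrow> real" where
  "coefB lam \<sigma> d L = (let L = real L in
     - 2*lam/L * c2 \<sigma> d 4 + 16*lam^2*\<sigma>^2/L^2 * c2 \<sigma> d 6
     + 8*lam^2*\<sigma>^2*(L-1)/L^2 * c1 \<sigma> 6 - lam*(L-1)/L * c1 \<sigma> 4
     + 4*lam^2*\<sigma>^2*(L-1)/L^2 * c2 \<sigma> d 3
     + lam^2*\<sigma>^2*(L-1)*(L-2)/L^2 * c1 \<sigma> 6)"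

definition coefC :: "real \<Rightarrow> real \<Rightarrow> nat \<Rightarrow> nat \<Rightarrow> real" where
  "coefC lam \<sigma> d L = (let L = real L in 4*lam^2*\<sigma>^2*(L-1)/L^2)"

definition coefD :: "real \<Rightarrow> real \<Rightarrow> nat \<Rightarrow> nat \<Rightarrow> real" where
  "coefD lam \<sigma> d L = (let L = real L in
     c1 \<sigma> (real d) - 8*lam*\<sigma>^2/L * c2 \<sigma> d 2 + 32*lam^2*\<sigma>^4/L^2 * c2 \<sigma> d 4
     + 64*lam^2*\<sigma>^6*(L-1)/L^2 - 8*lam*\<sigma>^4*(L-1)/L
     + 8*lam^2*\<sigma>^4*(L-1)/L^2 * c2 \<sigma> d 2 + 8*lam^2*\<sigma>^6*(L-1)*(L-2)/L^2)"

definition risk_restr :: "real \<Rightarrow> real \<Rightarrow> nat \<Rightarrow> nat \<Rightarrow> real \<Rightarrow> real \<Rightarrow> real" where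
  "risk_restr lam \<sigma> d L k0 k1 =
     coefA lam \<sigma> d L * (k0^4 + k1^4) + coefB lam \<sigma> d L * (k0^2 + k1^2)
     + coefC lam \<sigma> d L * k0^2 * k1^2 + coefD lam \<sigma> d L"

end

theory Submission
  imports Defs
begin

text \<open>In the variables \<open>u = \<kappa>\<^sub>0\<^sup>2\<close>, \<open>v = \<kappa>\<^sub>1\<^sup>2\<close> the risk is the quadratic
  \<open>A(u\<^sup>2 + v\<^sup>2) + B(u + v) + C u v + D\<close> on \<open>[0,1]\<^sup>2\<close>, with \<open>A, C \<ge> 0\<close>. The value \<open>\<lambda>\<^sup>\<star>\<close> is
  exactly the root of \<open>\<lambda> c\<^sub>3 = 2L c\<^sub>2(4) + L(L-1) c\<^sub>1(4)\<close>, which makes \<open>2A + B + C = 0\<close>, i.e. makes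
  \<open>(1,1)\<close> a stationary point. Eliminating \<open>B\<close>, the excess over the value at \<open>(1,1)\<close> becomes
  \<open>A(1-u)\<^sup>2 + A(1-v)\<^sup>2 + C(1-u)(1-v) \<ge> 0\<close>.\<close>

lemma quadratic_min_at_one_one:
  fixes A B C u v :: real
  assumes "2*A + B + C = 0" "A \<ge> 0" "C \<ge> 0" "u \<le> 1" "v \<le> 1"
  shows "2*A + 2*B + C \<le> A*(u^2 + v^2) + B*(u + v) + C*u*v"
proof -
  have B: "B = -2*A - C"
    using assms(1) by simp
  have "A*(u^2 + v^2) + B*(u + v) + C*u*v - (2*A + 2*B + C)
        = A*(1 - u)^2 + A*(1 - v)^2 + C*((1 - u)*(1 - v))"
    unfolding B by (simp add: algebra_simps power2_eq_square)
  moreover have "C*((1 - u)*(1 - v)) \<ge> 0"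
    using assms(3-5) by simp
  ultimately show ?thesis
    using assms(2) by (smt (verit) mult_nonneg_nonneg zero_le_power2)
qed

lemma nat_minus_one_times_minus_two_nonneg: "(real L - 1) * (real L - 2) \<ge> 0"
  by (cases "L \<le> 1") (auto simp: not_le intro: mult_nonneg_nonneg mult_nonpos_nonpos)

lemma c1_ge_one: "n \<ge> 0 \<Longrightarrow> c1 \<sigma> n \<ge> 1"
  unfolding c1_def by simp

lemma c2_ge_one: "n \<ge> 0 \<Longrightarrow> c2 \<sigma> d n \<ge> 1"
  unfolding c2_def by simp

lemma c3_pos:
  assumes "L \<ge> 1"
  shows "c3 \<sigma> d L > 0"
proof -
  have "(real L - 1) * (real L - 2) * c1 \<sigma> 4 \<ge> 0"
       "\<sigma>^2 * ((real L - 1) * (real L - 2)) * c1 \<sigma> 6 \<ge> 0"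
    using nat_minus_one_times_minus_two_nonneg[of L] c1_ge_one[of 4 \<sigma>] c1_ge_one[of 6 \<sigma>]
    by simp_all
  moreover have "c2 \<sigma> d 8 \<ge> 1"
    by (simp add: c2_ge_one)
  ultimately show ?thesis
    using assms c1_ge_one[of 5 \<sigma>] c1_ge_one[of 6 \<sigma>] c2_ge_one[of 3 \<sigma> d]
      c2_ge_one[of 4 \<sigma> d] c2_ge_one[of 6 \<sigma> d]
    unfolding c3_def Let_def
    by (smt (verit) mult.assoc mult_nonneg_nonneg of_nat_0_le_iff of_nat_1 of_nat_mono zero_le_power2)
qed

lemma coefA_nonneg:
  assumes "L \<ge> 1"
  shows "coefA lam \<sigma> d L \<ge> 0"
proof -
  have "2*lam^2/(real L)^2 * c2 \<sigma> d 8 \<ge> 0"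
    using c2_ge_one[of 8 \<sigma> d] by simp
  moreover have "2*lam^2*(real L - 1)/(real L)^2 * c1 \<sigma> 5 \<ge> 0"
    using assms c1_ge_one[of 5 \<sigma>] by simp
  moreover have "lam^2*(real L - 1)/(real L)^2 * c2 \<sigma> d 4 \<ge> 0"
    using assms c2_ge_one[of 4 \<sigma> d] by simp
  moreover have "lam^2*(real L - 1)*(real L - 2)/(2*(real L)^2) * c1 \<sigma> 4 \<ge> 0"
  proof -
    have "0 \<le> lam^2/(2*(real L)^2) * ((real L - 1)*(real L - 2) * c1 \<sigma> 4)"
      using nat_minus_one_times_minus_two_nonneg[of L] c1_ge_one[of 4 \<sigma>]
      by (simp add: mult_nonneg_nonneg)
    then show ?thesis
      by (simp add: field_simps)
  qed
  ultimately show ?thesis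
    unfolding coefA_def Let_def by linarith
qed

lemma coefC_nonneg:
  assumes "L \<ge> 1"
  shows "coefC lam \<sigma> d L \<ge> 0"
  using assms unfolding coefC_def Let_def by simp

lemma coefs_stationarity_defect:
  assumes "L \<ge> 1"
  shows "2*coefA lam \<sigma> d L + coefB lam \<sigma> d L + coefC lam \<sigma> d L
         = lam / (real L)^2 * (lam * c3 \<sigma> d L - (2*real L*c2 \<sigma> d 4 + real L*(real L - 1)*c1 \<sigma> 4))"
  using assms unfolding coefA_def coefB_def coefC_def c3_def Let_def
  by (simp add: field_simps power2_eq_square)

lemma lambda_star_stationary:
  assumes "L \<ge> 1"
  shows "2*coefA (lambda_star \<sigma> d L) \<sigma> d L + coefB (lambda_star \<sigma> d L) \<sigma> d L
         + coefC (lambda_star \<sigma> d L) \<sigma> d L = 0"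
proof -
  have "lambda_star \<sigma> d L * c3 \<sigma> d L = 2*real L*c2 \<sigma> d 4 + real L*(real L - 1)*c1 \<sigma> 4"
    using c3_pos[OF assms, of \<sigma> d] unfolding lambda_star_def Let_def by simp
  then show ?thesis
    by (simp add: coefs_stationarity_defect[OF assms])
qed

lemma risk_restr_min_at_sign_points:
  assumes "2*coefA lam \<sigma> d L + coefB lam \<sigma> d L + coefC lam \<sigma> d L = 0"
    and "coefA lam \<sigma> d L \<ge> 0" "coefC lam \<sigma> d L \<ge> 0"
    and "s0^2 = 1" "s1^2 = 1" "\<bar>k0\<bar> \<le> 1" "\<bar>k1\<bar> \<le> 1"
  shows "risk_restr lam \<sigma> d L s0 s1 \<le> risk_restr lam \<sigma> d L k0 k1"
proof -
  have "k0^2 \<le> 1" "k1^2 \<le> 1"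
    using assms(6,7) by (simp_all add: abs_square_le_1)
  from quadratic_min_at_one_one[OF assms(1-3) this]
  show ?thesis
    unfolding risk_restr_def
    using assms(4,5) by (simp add: power4_eq_xxxx power2_eq_square mult.assoc)
qed

theorem proposition10:
  fixes d L :: nat and \<sigma> :: real
  assumes "d \<ge> 2" and "L \<ge> 2" and "\<sigma> > 0"
  shows "\<forall>s0\<in>{-1, 1::real}. \<forall>s1\<in>{-1, 1::real}. \<forall>k0\<in>{-1..1}. \<forall>k1\<in>{-1..1}.
           risk_restr (lambda_star \<sigma> d L) \<sigma> d L s0 s1
             \<le> risk_restr (lambda_star \<sigma> d L) \<sigma> d L k0 k1"
proof (intro ballI)
  fix s0 s1 k0 k1 :: real
  assume "s0 \<in> {-1, 1}" "s1 \<in> {-1, 1}" "k0 \<in> {-1..1}" "k1 \<in> {-1..1}"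
  then have signs: "s0^2 = 1" "s1^2 = 1" and bounds: "\<bar>k0\<bar> \<le> 1" "\<bar>k1\<bar> \<le> 1"
    by auto
  have "L \<ge> 1" using assms(2) by simp
  from risk_restr_min_at_sign_points[OF lambda_star_stationary[OF this]
      coefA_nonneg[OF this] coefC_nonneg[OF this] signs bounds]
  show "risk_restr (lambda_star \<sigma> d L) \<sigma> d L s0 s1 \<le> risk_restr (lambda_star \<sigma> d L) \<sigma> d L k0 k1" .
qed

end
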